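(* Let $X$ be a proper geodesic metric space with a convergence compactification $(\partial X,[\cdot])$. Given $r\ge C>0$, there exist $\hat r=\hat r(r,C)$ and $L_0=L_0(r,C)$ with the following property. Given $L\ge L_0$ and $\theta\in(0,1]$, let $\gamma$ be a geodesic ray starting at a point $o\in X$ that is $(r,C,L)$-contracting at $\theta$-frequency, and assume its terminal class $[\gamma^+]$ consists of non-pinched points. Then every geodesic ray from $o$ ending at $[\gamma^+]$ is $(\hat r,C,L)$-contracting at $\theta$-frequency.
   Context: $\pi_A$ is nearest-point projection; a closed $U$ is $C$-contracting if every geodesic $\gamma$ with $d(\gamma,U)\ge C$ has $\mathrm{diam}(\pi_U(\gamma))\le C$. Convergence compactification: $\overline X=X\cup\partial X$ metrizable, $X$ open dense, isometries extend to homeomorphisms, $\partial X$ has an $\mathrm{Isom}(X)$-invariant partition $[\cdot]$. A sequence accumulates into $[\xi]$ if all its accumulation points lie in $[\xi]$; a ray ends at $[\xi]$ if every unbounded sequence of its points accumulates into $[\xi]$. Sets $A_n$ are escaping if $d(o,A_n)\to\infty$; $\Omega_o(A)=\{x:\mathrm{diam}([o,x]\cap A)\ge 10C\}$. Axioms: (A) each contracting geodesic ray accumulates into a closed class and sequences with escaping projections to it accumulate into that class; (B) for an escaping sequence of $C$-contracting quasi-geodesics $\gamma_n$, some subsequence $A_n$ of $\gamma_n\cup\Omega_o(\gamma_n)$ and some class $[\xi]$ satisfy: every convergent sequence $x_n\in A_n$ tends into $[\xi]$; (C) non-pinched points exist, where $\xi$ is non-pinched if whenever $x_n,y_n\in X$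 converge to $[\xi]$ the geodesic segments $[x_n,y_n]$ are escaping. A geodesic segment $\gamma$ is $(r,C,L)$-contracting at $\theta$-frequency if for every $0<t<(1-\theta)\ell(\gamma)$ there are an interval $[s-L/2,s+L/2]\subseteq[t,t+\theta\ell(\gamma)]$ and a $C$-contracting geodesic $p$ with $d(\gamma(u),p)\le r$ on that interval; a geodesic ray is so if there is $R_0$ such that every initial segment $\gamma[0,t]$, $t\ge R_0$, is. Such a ray (for $L$ large) accumulates into a single class $[\gamma^+]$. *)

theory Defs
  imports "HOL-Analysis.Analysis"
begin

text \<open>Extended-real diameter (Sup of distances); avoids the library convention
  that the diameter of an unbounded set is 0.\<close>
definition ediam :: "'a::metric_space set \<Rightarrow> ereal" where
  "ediam S = (SUP x\<in>S. SUP y\<in>S. ereal (dist x y))"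

definition sdist :: "'a::metric_space set \<Rightarrow> 'a set \<Rightarrow> real" where
  "sdist A B = (INF a\<in>A. infdist a B)"

definition proj :: "'a::metric_space set \<Rightarrow> 'a \<Rightarrow> 'a set" where
  "proj U x = {u\<in>U. dist x u = infdist x U}"

definition projset :: "'a::metric_space set \<Rightarrow> 'a set \<Rightarrow> 'a set" where
  "projset U A = (\<Union>x\<in>A. proj U x)"

definition geod_seg :: "(real \<Rightarrow> 'a::metric_space) \<Rightarrow> real \<Rightarrow> 'a \<Rightarrow> 'a \<Rightarrow> bool" where
  "geod_seg g l x y \<longleftrightarrow> 0 \<le> l \<and> g 0 = x \<and> g l = y \<and>
     (\<forall>s\<in>{0..l}. \<forall>t\<in>{0..l}. dist (g s) (g t) = \<bar>s - t\<bar>)"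

definition geod_ray :: "(real \<Rightarrow> 'a::metric_space) \<Rightarrow> 'a \<Rightarrow> bool" where
  "geod_ray g x0 \<longleftrightarrow> g 0 = x0 \<and> (\<forall>s\<ge>0. \<forall>t\<ge>0. dist (g s) (g t) = \<bar>s - t\<bar>)"

definition quasi_geod :: "real \<Rightarrow> real \<Rightarrow> (real \<Rightarrow> 'a::metric_space) \<Rightarrow> real set \<Rightarrow> bool" where
  "quasi_geod lam c q I \<longleftrightarrow> is_interval I \<and> I \<noteq> {} \<and>
     (\<forall>s\<in>I. \<forall>t\<in>I. \<bar>s - t\<bar> / lam - c \<le> dist (q s) (q t) \<and> dist (q s) (q t) \<le> lam * \<bar>s - t\<bar> + c)"

definition contracting :: "real \<Rightarrow> 'a::metric_space set \<Rightarrow> bool" where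
  "contracting C U \<longleftrightarrow> closed U \<and>
     (\<forall>g l x y. geod_seg g l x y \<longrightarrow> sdist (g ` {0..l}) U \<ge> C \<longrightarrow>
        ediam (projset U (g ` {0..l})) \<le> ereal C)"

definition escaping :: "(nat \<Rightarrow> 'a::metric_space set) \<Rightarrow> bool" where
  "escaping A \<longleftrightarrow> (\<forall>x0. filterlim (\<lambda>n. infdist x0 (A n)) at_top sequentially)"

definition Omega :: "'a::metric_space \<Rightarrow> real \<Rightarrow> 'a set \<Rightarrow> 'a set" where
  "Omega x0 C A = {x. \<exists>g l. geod_seg g l x0 x \<and> ediam (g ` {0..l} \<inter> A) \<ge> ereal (10 * C)}"

definition freq_seg :: "real \<Rightarrow> real \<Rightarrow> real \<Rightarrow> real \<Rightarrow> (real \<Rightarrow> 'a::metric_space) \<Rightarrow> real \<Rightarrow> bool" where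
  "freq_seg r C L \<theta> g l \<longleftrightarrow>
     (\<forall>t. 0 < t \<and> t < (1 - \<theta>) * l \<longrightarrow>
        (\<exists>s. {s - L/2 .. s + L/2} \<subseteq> {t .. t + \<theta> * l} \<and>
           (\<exists>p lp a b. geod_seg p lp a b \<and> contracting C (p ` {0..lp}) \<and>
              (\<forall>u\<in>{s - L/2 .. s + L/2}. infdist (g u) (p ` {0..lp}) \<le> r))))"

definition freq_ray :: "real \<Rightarrow> real \<Rightarrow> real \<Rightarrow> real \<Rightarrow> (real \<Rightarrow> 'a::metric_space) \<Rightarrow> bool" where
  "freq_ray r C L \<theta> g \<longleftrightarrow> (\<exists>R0. \<forall>t\<ge>R0. freq_seg r C L \<theta> g t)"

definition isometry_of :: "('a::metric_space \<Rightarrow> 'a) \<Rightarrow> bool" where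
  "isometry_of f \<longleftrightarrow> surj f \<and> (\<forall>x y. dist (f x) (f y) = dist x y)"

section \<open>Compactification: X embedded in Xbar via e, partition of boundary given by rel\<close>

definition bdry :: "('a \<Rightarrow> 'm) \<Rightarrow> 'm set" where
  "bdry e = - range e"

definition cls :: "('a \<Rightarrow> 'm) \<Rightarrow> ('m \<Rightarrow> 'm \<Rightarrow> bool) \<Rightarrow> 'm \<Rightarrow> 'm set" where
  "cls e rel \<xi> = {\<eta>\<in>bdry e. rel \<xi> \<eta>}"

definition accum_into :: "('a \<Rightarrow> 'm::metric_space) \<Rightarrow> (nat \<Rightarrow> 'a) \<Rightarrow> 'm set \<Rightarrow> bool" where
  "accum_into e x S \<longleftrightarrow> (\<forall>p. (\<exists>\<phi>. strict_mono \<phi> \<and> ((\<lambda>n. e (x (\<phi> n))) \<longlonglongrightarrow> p)) \<longrightarrow> p \<in> S)"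

definition ends_at :: "('a::metric_space \<Rightarrow> 'm::metric_space) \<Rightarrow> ('m \<Rightarrow> 'm \<Rightarrow> bool) \<Rightarrow> (real \<Rightarrow> 'a) \<Rightarrow> 'm \<Rightarrow> bool" where
  "ends_at e rel g \<xi> \<longleftrightarrow> (\<forall>t::nat \<Rightarrow> real. (\<forall>n. 0 \<le> t n) \<and> filterlim t at_top sequentially \<longrightarrow>
       accum_into e (\<lambda>n. g (t n)) (cls e rel \<xi>))"

definition nonpinched :: "('a::metric_space \<Rightarrow> 'm::metric_space) \<Rightarrow> ('m \<Rightarrow> 'm \<Rightarrow> bool) \<Rightarrow> 'm \<Rightarrow> bool" where
  "nonpinched e rel \<xi> \<longleftrightarrow>
     (\<forall>x y. accum_into e x (cls e rel \<xi>) \<and> accum_into e y (cls e rel \<xi>) \<longrightarrow>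
        (\<forall>g l. (\<forall>n. geod_seg (g n) (l n) (x n) (y n)) \<longrightarrow> escaping (\<lambda>n. g n ` {0..l n})))"

definition conv_compact :: "('a::metric_space \<Rightarrow> 'm::metric_space) \<Rightarrow> ('m \<Rightarrow> 'm \<Rightarrow> bool) \<Rightarrow> bool" where
  "conv_compact e rel \<longleftrightarrow>
     compact (UNIV :: 'm set) \<and>
     (\<exists>e'. homeomorphism UNIV (range e) e e') \<and> open (range e) \<and> closure (range e) = UNIV \<and>
     \<comment> \<open>partition of the boundary into classes\<close>
     (\<forall>\<xi>\<in>bdry e. rel \<xi> \<xi>) \<and>
     (\<forall>\<xi>\<in>bdry e. \<forall>\<eta>\<in>bdry e. rel \<xi> \<eta> \<longrightarrow> rel \<eta> \<xi>) \<and>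
     (\<forall>\<xi>\<in>bdry e. \<forall>\<eta>\<in>bdry e. \<forall>\<zeta>\<in>bdry e. rel \<xi> \<eta> \<longrightarrow> rel \<eta> \<zeta> \<longrightarrow> rel \<xi> \<zeta>) \<and>
     \<comment> \<open>isometries extend to homeomorphisms preserving the partition\<close>
     (\<forall>f. isometry_of f \<longrightarrow> (\<exists>h h'. homeomorphism UNIV UNIV h h' \<and> (\<forall>x. h (e x) = e (f x)) \<and>
        (\<forall>\<xi>\<in>bdry e. \<forall>\<eta>\<in>bdry e. rel \<xi> \<eta> \<longleftrightarrow> rel (h \<xi>) (h \<eta>)))) \<and>
     \<comment> \<open>Axiom (A)\<close>
     (\<forall>g x0 C. geod_ray g x0 \<and> contracting C (g ` {0..}) \<longrightarrow>
        (\<exists>\<xi>\<in>bdry e. closed (cls e rel \<xi>) \<and> ends_at e rel g \<xi> \<and>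
           (\<forall>y. escaping (\<lambda>n. proj (g ` {0..}) (y n)) \<longrightarrow> accum_into e y (cls e rel \<xi>)))) \<and>
     \<comment> \<open>Axiom (B)\<close>
     (\<forall>C lam c q I. lam \<ge> 1 \<and> c \<ge> 0 \<and>
        (\<forall>n. quasi_geod lam c (q n) (I n) \<and> contracting C (q n ` I n)) \<and>
        escaping (\<lambda>n. q n ` I n) \<longrightarrow>
        (\<forall>x0. \<exists>\<phi> \<xi>. strict_mono \<phi> \<and> \<xi> \<in> bdry e \<and>
           (\<forall>x. (\<forall>n. x n \<in> q (\<phi> n) ` I (\<phi> n) \<union> Omega x0 C (q (\<phi> n) ` I (\<phi> n))) \<longrightarrow>
              (\<forall>p. (\<lambda>n. e (x n)) \<longlonglongrightarrow> p \<longrightarrow> p \<in> cls e rel \<xi>)))) \<and>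
     \<comment> \<open>Axiom (C)\<close>
     (\<exists>\<xi>\<in>bdry e. nonpinched e rel \<xi>)"

end

(* Fix a window of length L on which \<gamma> stays r-close to a C-contracting geodesic segment P.
   As [\<gamma>+] consists of non-pinched points, the geodesics from \<gamma>(n) to \<beta>(n) escape, so for
   large n they stay C-far from P and the projections of \<gamma>(n) and \<beta>(n) to P are C-close.
   Hence the projection of \<beta>(n) lies beyond the window while that of the common base point
   lies before it. By contraction, \<beta> must enter a bounded neighbourhood of P before the window
   and leave it only after, and quasiconvexity of contracting sets keeps \<beta> close to P in
   between. *)

theory Submission
  imports Defs
begin

definition geodesic_on :: "(real \<Rightarrow> 'a::metric_space) \<Rightarrow> real set \<Rightarrow> bool" where
  "geodesic_on g S \<longleftrightarrow> (\<forall>s\<in>S. \<forall>t\<in>S. dist (g s) (g t) = \<bar>s - t\<bar>)"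

lemma geodesic_onD: "geodesic_on g S \<Longrightarrow> s \<in> S \<Longrightarrow> t \<in> S \<Longrightarrow> dist (g s) (g t) = \<bar>s - t\<bar>"
  unfolding geodesic_on_def by blast

lemma geodesic_on_subset: "geodesic_on g S \<Longrightarrow> T \<subseteq> S \<Longrightarrow> geodesic_on g T"
  unfolding geodesic_on_def by blast

lemma geodesic_on_reflect:
  assumes "geodesic_on g {a..b}"
  shows "geodesic_on (\<lambda>t. g (- t)) {-b..-a}"
  unfolding geodesic_on_def
proof (intro ballI)
  fix s t :: real assume "s \<in> {-b..-a}" "t \<in> {-b..-a}"
  then have "dist (g (- s)) (g (- t)) = \<bar>- s - - t\<bar>"
    by (intro geodesic_onD[OF assms]) auto
  then show "dist (g (- s)) (g (- t)) = \<bar>s - t\<bar>" by simp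
qed

lemma geodesic_on_compact_image:
  assumes "geodesic_on g {a..b}"
  shows "compact (g ` {a..b})"
proof -
  have "1-lipschitz_on {a..b} g"
    using assms by (intro lipschitz_onI) (auto simp: geodesic_on_def dist_real_def)
  then show ?thesis
    by (intro compact_continuous_image lipschitz_on_continuous_on) auto
qed

lemma geod_seg_iff:
  "geod_seg g l x y \<longleftrightarrow> 0 \<le> l \<and> g 0 = x \<and> g l = y \<and> geodesic_on g {0..l}"
  unfolding geod_seg_def geodesic_on_def by blast

lemma geod_ray_iff: "geod_ray g x0 \<longleftrightarrow> g 0 = x0 \<and> geodesic_on g {0..}"
  unfolding geod_ray_def geodesic_on_def by auto

lemma geod_ray_dist_start: "geod_ray g x0 \<Longrightarrow> 0 \<le> u \<Longrightarrow> dist x0 (g u) = u"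
  unfolding geod_ray_def by force

lemma proj_nonempty:
  assumes "compact P" "P \<noteq> {}"
  shows "proj P x \<noteq> {}"
proof -
  have "continuous_on P (dist x)"
    by (intro continuous_intros)
  then obtain c where c: "c \<in> P" "\<forall>y\<in>P. dist x c \<le> dist x y"
    using continuous_attains_inf[OF assms] by blast
  then have "infdist x P = dist x c"
    using assms(2) by (intro antisym infdist_le) (auto simp: infdist_notempty intro: cINF_greatest)
  then show ?thesis
    using c(1) unfolding proj_def by auto
qed

lemma dist_proj: "c \<in> proj P x \<Longrightarrow> dist x c = infdist x P"
  unfolding proj_def by auto

lemma contracting_proj_dist_le:
  assumes "contracting C P" "geod_seg g l x y" "\<forall>t\<in>{0..l}. C \<le> infdist (g t) P"
    and "c1 \<in> proj P x" "c2 \<in> proj P y"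
  shows "dist c1 c2 \<le> C"
proof -
  have endpoints: "x \<in> g ` {0..l}" "y \<in> g ` {0..l}"
    using assms(2) unfolding geod_seg_def by force+
  then have "C \<le> sdist (g ` {0..l}) P"
    using assms(3) unfolding sdist_def by (auto intro: cINF_greatest)
  then have "ediam (projset P (g ` {0..l})) \<le> ereal C"
    using assms(1,2) unfolding contracting_def by blast
  moreover have "c1 \<in> projset P (g ` {0..l})" "c2 \<in> projset P (g ` {0..l})"
    using assms(4,5) endpoints unfolding projset_def by auto
  ultimately have "ereal (dist c1 c2) \<le> ereal C"
    unfolding ediam_def by (meson SUP_upper order_trans)
  then show ?thesis by simp
qed

lemma contracting_proj_dist_le_on:
  assumes "contracting C P" "geodesic_on g {a..b}" "a \<le> b" "\<forall>t\<in>{a..b}. C \<le> infdist (g t) P"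
    and "c1 \<in> proj P (g a)" "c2 \<in> proj P (g b)"
  shows "dist c1 c2 \<le> C"
proof (rule contracting_proj_dist_le[OF assms(1) _ _ assms(5,6)])
  show "geod_seg (\<lambda>t. g (a + t)) (b - a) (g a) (g b)"
    using assms(2,3) unfolding geod_seg_iff geodesic_on_def by auto
  show "\<forall>t\<in>{0..b - a}. C \<le> infdist (g (a + t)) P"
    using assms(4) by auto
qed

lemma contracting_last_exit:
  assumes ctr: "contracting C P" and P: "compact P" "P \<noteq> {}"
    and g: "geodesic_on g {a..b}" and ab: "a \<le> b" and \<rho>: "C \<le> \<rho>" "0 \<le> C"
    and start: "infdist (g a) P \<le> \<rho>"
  shows "\<exists>w\<in>{a..b}. infdist (g w) P \<le> \<rho> + 2 \<and> (\<forall>c\<in>proj P (g b). dist (g w) c \<le> \<rho> + 2 + C)"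
proof -
  define S where "S = {t\<in>{a..b}. infdist (g t) P \<le> \<rho>}"
  have "a \<in> S" and bdd: "bdd_above S"
    using ab start unfolding S_def by (auto intro: bdd_aboveI[of _ b])
  then obtain t1 where t1: "t1 \<in> S" "Sup S - 1 < t1"
    using less_cSup_iff[of S "Sup S - 1"] by auto
  have "t1 \<le> Sup S"
    using t1(1) bdd by (rule cSup_upper)
  \<comment> \<open>One unit past the supremum of the \<rho>-close times: all later times are \<rho>-far,
    hence C-far, while w is within 2 of a \<rho>-close time.\<close>
  define w where "w = min (Sup S + 1) b"
  have t1_ab: "t1 \<in> {a..b}"
    using t1(1) unfolding S_def by auto
  with \<open>t1 \<le> Sup S\<close> have w_ab: "w \<in> {a..b}"
    unfolding w_def by auto
  have "infdist (g w) P \<le> infdist (g t1) P + dist (g w) (g t1)"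
    by (rule infdist_triangle)
  also have "dist (g w) (g t1) \<le> 2"
    using geodesic_onD[OF g w_ab t1_ab] t1 \<open>t1 \<le> Sup S\<close> t1_ab unfolding w_def by auto
  finally have w_close: "infdist (g w) P \<le> \<rho> + 2"
    using t1(1) unfolding S_def by auto
  have "dist (g w) c \<le> \<rho> + 2 + C" if c: "c \<in> proj P (g b)" for c
  proof (cases "w = b")
    case True
    then show ?thesis
      using dist_proj[OF c] w_close \<rho> by simp
  next
    case False
    then have w: "w = Sup S + 1" "w < b"
      using w_ab unfolding w_def by auto
    have "t \<notin> S" if "w \<le> t" for t
      using cSup_upper[OF _ bdd, of t] that w by auto
    then have far: "\<forall>t\<in>{w..b}. C \<le> infdist (g t) P"
      using w_ab \<rho> unfolding S_def by force
    obtain c' where c': "c' \<in> proj P (g w)"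
      using proj_nonempty[OF P] by blast
    have "dist c' c \<le> C"
      using contracting_proj_dist_le_on[OF ctr _ _ far c' c] geodesic_on_subset[OF g] w_ab w by auto
    moreover have "dist (g w) c' \<le> \<rho> + 2"
      using dist_proj[OF c'] w_close by simp
    ultimately show ?thesis
      using dist_triangle[of "g w" c c'] by linarith
  qed
  with w_ab w_close show ?thesis by blast
qed

lemma contracting_first_entry:
  assumes ctr: "contracting C P" and P: "compact P" "P \<noteq> {}"
    and g: "geodesic_on g {a..b}" and ab: "a \<le> b" and \<rho>: "C \<le> \<rho>" "0 \<le> C"
    and final: "infdist (g b) P \<le> \<rho>"
  shows "\<exists>v\<in>{a..b}. infdist (g v) P \<le> \<rho> + 2 \<and> (\<forall>c\<in>proj P (g a). dist (g v) c \<le> \<rho> + 2 + C)"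
proof -
  obtain w where "w \<in> {-b..-a}" "infdist (g (- w)) P \<le> \<rho> + 2"
    "\<forall>c\<in>proj P (g a). dist (g (- w)) c \<le> \<rho> + 2 + C"
    using contracting_last_exit[OF ctr P geodesic_on_reflect[OF g] _ \<rho>] ab final by auto
  then show ?thesis
    by (intro bexI[of _ "- w"]) auto
qed

lemma contracting_quasiconvex:
  assumes ctr: "contracting C P" and P: "compact P" "P \<noteq> {}"
    and g: "geodesic_on g {a..b}" and u: "a \<le> u" "u \<le> b" and \<rho>: "C \<le> \<rho>" "0 \<le> C"
    and ends: "infdist (g a) P \<le> \<rho>" "infdist (g b) P \<le> \<rho>"
  shows "infdist (g u) P \<le> 3 * \<rho> + 6 + 2 * C"
proof -
  obtain w1 where w1: "w1 \<in> {a..u}" "infdist (g w1) P \<le> \<rho> + 2"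
    "\<forall>c\<in>proj P (g u). dist (g w1) c \<le> \<rho> + 2 + C"
    using contracting_last_exit[OF ctr P geodesic_on_subset[OF g] u(1) \<rho> ends(1)] u by auto
  obtain w2 where w2: "w2 \<in> {u..b}" "\<forall>c\<in>proj P (g u). dist (g w2) c \<le> \<rho> + 2 + C"
    using contracting_first_entry[OF ctr P geodesic_on_subset[OF g] u(2) \<rho> ends(2)] u by auto
  obtain c where c: "c \<in> proj P (g u)"
    using proj_nonempty[OF P] by blast
  have "w2 - w1 = dist (g w1) (g w2)"
    using geodesic_onD[OF g, of w1 w2] w1(1) w2(1) u by auto
  also have "\<dots> \<le> 2 * (\<rho> + 2 + C)"
    using w1(3) w2(2) c dist_triangle[of "g w1" "g w2" c] by (fastforce simp: dist_commute)
  finally have "u - w1 \<le> 2 * (\<rho> + 2 + C)"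
    using w2(1) by auto
  moreover have "infdist (g u) P \<le> infdist (g w1) P + (u - w1)"
    using infdist_triangle[of "g u" P "g w1"] geodesic_onD[OF g, of u w1] w1(1) u by auto
  ultimately show ?thesis
    using w1(2) by (simp add: algebra_simps)
qed

lemma escaping_eventually_far:
  assumes "escaping A" "bounded P" "P \<noteq> {}"
  shows "eventually (\<lambda>n. \<forall>z\<in>A n. D \<le> infdist z P) sequentially"
proof -
  obtain p0 where "p0 \<in> P"
    using assms(3) by blast
  obtain R where R: "\<forall>c\<in>P. dist p0 c \<le> R"
    using assms(2) bounded_any_center by blast
  have "eventually (\<lambda>n. D + R \<le> infdist p0 (A n)) sequentially"
    using assms(1) unfolding escaping_def filterlim_at_top by blast
  then show ?thesis
  proof (rule eventually_mono, intro ballI)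
    fix n z assume far: "D + R \<le> infdist p0 (A n)" and z: "z \<in> A n"
    have "D \<le> dist z c" if "c \<in> P" for c
      using far infdist_le[OF z, of p0] R that dist_triangle[of p0 z c] by (auto simp: dist_commute)
    then show "D \<le> infdist z P"
      using assms(3) by (auto simp: infdist_notempty intro: cINF_greatest)
  qed
qed

lemma nonpinched_eventually_proj_close:
  fixes x y :: "nat \<Rightarrow> 'a::metric_space"
  assumes geodesic: "\<forall>x y::'a. \<exists>g l. geod_seg g l x y"
    and np: "nonpinched e rel \<xi>"
    and acc: "accum_into e x (cls e rel \<xi>)" "accum_into e y (cls e rel \<xi>)"
    and P: "contracting C P" "bounded P" "P \<noteq> {}"
  shows "eventually (\<lambda>n. \<forall>c1\<in>proj P (x n). \<forall>c2\<in>proj P (y n). dist c1 c2 \<le> C) sequentially"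
proof -
  have "\<forall>n. \<exists>g l. geod_seg g l (x n) (y n)"
    using geodesic by blast
  then obtain G Ln where G: "\<And>n. geod_seg (G n) (Ln n) (x n) (y n)"
    by (auto simp: choice_iff)
  then have "escaping (\<lambda>n. G n ` {0..Ln n})"
    using np acc unfolding nonpinched_def by blast
  then have "eventually (\<lambda>n. \<forall>z\<in>G n ` {0..Ln n}. C \<le> infdist z P) sequentially"
    using P(2,3) by (rule escaping_eventually_far)
  then show ?thesis
    by (rule eventually_mono) (use contracting_proj_dist_le[OF P(1) G] in blast)
qed

lemma geod_ray_close_on_window:
  assumes ctr: "contracting C P" and P: "compact P" "P \<noteq> {}" and rC: "C \<le> r" "0 \<le> C"
    and \<beta>: "geod_ray \<beta> x0" and n: "0 \<le> n"
    and c0: "c0 \<in> proj P x0" "dist x0 c0 \<le> a + r"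
    and cn: "cn \<in> proj P (\<beta> n)" "b - (r + 2 + 2 * C) \<le> dist x0 cn"
    and window: "0 \<le> a" "2 * r + 3 * C + 3 \<le> b - a" and u: "u \<in> {a..b}"
  shows "infdist (\<beta> u) P \<le> 3 * r + 3 * C + 12"
proof -
  have geo: "geodesic_on \<beta> {0..}" and \<beta>0: "\<beta> 0 = x0"
    using \<beta> unfolding geod_ray_iff by auto
  have "\<exists>b0\<in>{0..n}. infdist (\<beta> b0) P \<le> r"
  proof (rule ccontr)
    assume "\<not> ?thesis"
    then have "\<forall>t\<in>{0..n}. C \<le> infdist (\<beta> t) P"
      using rC by force
    then have "dist c0 cn \<le> C"
      using contracting_proj_dist_le_on[OF ctr geodesic_on_subset[OF geo] n _ _ cn(1)] c0(1) \<beta>0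
      by auto
    then show False
      using dist_triangle[of x0 cn c0] c0(2) cn(2) window by linarith
  qed
  then obtain b0 where b0: "b0 \<in> {0..n}" "infdist (\<beta> b0) P \<le> r"
    by blast
  obtain vf where vf: "vf \<in> {0..b0}" "infdist (\<beta> vf) P \<le> r + 2" "dist (\<beta> vf) c0 \<le> r + 2 + C"
    using contracting_first_entry[OF ctr P geodesic_on_subset[OF geo] _ rC b0(2)] b0(1) c0(1) \<beta>0
    by fastforce
  have "vf = dist x0 (\<beta> vf)"
    using geod_ray_dist_start[OF \<beta>] vf(1) by auto
  then have vf_le: "vf \<le> a + 2 * r + 2 + C"
    using dist_triangle[of x0 "\<beta> vf" c0] c0(2) vf(3) by (simp add: dist_commute)
  obtain vl where vl: "vl \<in> {b0..n}" "infdist (\<beta> vl) P \<le> r + 2" "dist (\<beta> vl) cn \<le> r + 2 + C"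
    using contracting_last_exit[OF ctr P geodesic_on_subset[OF geo] _ rC b0(2)] b0(1) cn(1)
    by fastforce
  have "dist x0 (\<beta> vl) = vl"
    using geod_ray_dist_start[OF \<beta>] vl(1) b0(1) by auto
  then have vl_ge: "b - (2 * r + 4 + 3 * C) \<le> vl"
    using dist_triangle[of x0 cn "\<beta> vl"] cn(2) vl(3) by linarith
  have shift: "infdist (\<beta> u) P \<le> infdist (\<beta> v) P + \<bar>u - v\<bar>" if "0 \<le> v" for v
    using infdist_triangle[of "\<beta> u" P "\<beta> v"] geodesic_onD[OF geo, of u v] that u window(1)
    by auto
  consider "u < vf" | "vl < u" | "vf \<le> u" "u \<le> vl"
    by linarith
  then show ?thesis
  proof cases
    case 1
    then show ?thesis
      using shift[of vf] vf vf_le u rC by auto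
  next
    case 2
    then show ?thesis
      using shift[of vl] vl vl_ge u rC b0(1) by auto
  next
    case 3
    then have "infdist (\<beta> u) P \<le> 3 * (r + 2) + 6 + 2 * C"
      using contracting_quasiconvex[OF ctr P geodesic_on_subset[OF geo], of vf vl u "r + 2"]
        vf vl rC by auto
    then show ?thesis
      using rC by simp
  qed
qed

lemma geod_ray_close_on_window_transfer:
  assumes ctr: "contracting C P" and P: "compact P" "P \<noteq> {}" and rC: "C \<le> r" "0 \<le> C"
    and \<gamma>: "geod_ray \<gamma> x0" and \<beta>: "geod_ray \<beta> x0"
    and window: "0 \<le> a" "2 * r + 3 * C + 3 \<le> b - a"
    and \<gamma>_close: "\<forall>u\<in>{a..b}. infdist (\<gamma> u) P \<le> r"
    and n: "b \<le> n" "\<forall>c1\<in>proj P (\<gamma> n). \<forall>c2\<in>proj P (\<beta> n). dist c1 c2 \<le> C"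
  shows "\<forall>u\<in>{a..b}. infdist (\<beta> u) P \<le> 3 * r + 3 * C + 12"
proof
  fix u assume u: "u \<in> {a..b}"
  have ab: "a \<le> b"
    using window rC by linarith
  obtain c0 where c0: "c0 \<in> proj P x0"
    using proj_nonempty[OF P] by blast
  have "dist x0 c0 \<le> infdist (\<gamma> a) P + dist x0 (\<gamma> a)"
    using dist_proj[OF c0] infdist_triangle by metis
  moreover have "infdist (\<gamma> a) P \<le> r"
    using \<gamma>_close ab by auto
  ultimately have c0_near: "dist x0 c0 \<le> a + r"
    using geod_ray_dist_start[OF \<gamma> window(1)] by linarith
  obtain c\<gamma> cn where c\<gamma>: "c\<gamma> \<in> proj P (\<gamma> n)" and cn: "cn \<in> proj P (\<beta> n)"
    using proj_nonempty[OF P] by blast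
  have "geodesic_on \<gamma> {b..n}"
    using \<gamma> window ab unfolding geod_ray_iff by (auto elim: geodesic_on_subset)
  then obtain w where w: "w \<in> {b..n}" "dist (\<gamma> w) c\<gamma> \<le> r + 2 + C"
    using contracting_last_exit[OF ctr P _ n(1) rC] \<gamma>_close ab c\<gamma> by fastforce
  have "w = dist x0 (\<gamma> w)"
    using geod_ray_dist_start[OF \<gamma>] w(1) window ab by auto
  also have "\<dots> \<le> dist x0 cn + dist cn c\<gamma> + dist c\<gamma> (\<gamma> w)"
    using dist_triangle[of x0 "\<gamma> w" cn] dist_triangle[of cn "\<gamma> w" c\<gamma>] by linarith
  finally have "b - (r + 2 + 2 * C) \<le> dist x0 cn"
    using w n(2) c\<gamma> cn by (force simp: dist_commute)
  then show "infdist (\<beta> u) P \<le> 3 * r + 3 * C + 12"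
    using geod_ray_close_on_window[OF ctr P rC \<beta> _ c0 c0_near cn _ window u] window ab n(1)
    by linarith
qed

lemma ends_at_accum_into:
  "ends_at e rel g \<xi> \<Longrightarrow> accum_into e (\<lambda>n. g (real n)) (cls e rel \<xi>)"
  unfolding ends_at_def using filterlim_real_sequentially by simp

lemma nonpinched_geod_ray_close_on_window:
  fixes \<gamma> \<beta> :: "real \<Rightarrow> 'a::metric_space"
  assumes geodesic: "\<forall>x y::'a. \<exists>g l. geod_seg g l x y"
    and np: "nonpinched e rel \<xi>"
    and \<gamma>: "geod_ray \<gamma> x0" "ends_at e rel \<gamma> \<xi>" and \<beta>: "geod_ray \<beta> x0" "ends_at e rel \<beta> \<xi>"
    and ctr: "contracting C P" and P: "compact P" "P \<noteq> {}" and rC: "C \<le> r" "0 \<le> C"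
    and window: "0 \<le> a" "2 * r + 3 * C + 3 \<le> b - a"
    and \<gamma>_close: "\<forall>u\<in>{a..b}. infdist (\<gamma> u) P \<le> r"
  shows "\<forall>u\<in>{a..b}. infdist (\<beta> u) P \<le> 3 * r + 3 * C + 12"
proof -
  have "eventually (\<lambda>n. \<forall>c1\<in>proj P (\<gamma> (real n)). \<forall>c2\<in>proj P (\<beta> (real n)). dist c1 c2 \<le> C)
      sequentially"
    using nonpinched_eventually_proj_close[OF geodesic np ends_at_accum_into[OF \<gamma>(2)]
        ends_at_accum_into[OF \<beta>(2)] ctr compact_imp_bounded[OF P(1)] P(2)] .
  moreover have "eventually (\<lambda>n. b \<le> real n) sequentially"
    using filterlim_real_sequentially by (simp add: filterlim_at_top)
  ultimately have "eventually (\<lambda>n. b \<le> real n \<and>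
      (\<forall>c1\<in>proj P (\<gamma> (real n)). \<forall>c2\<in>proj P (\<beta> (real n)). dist c1 c2 \<le> C)) sequentially"
    by (auto elim: eventually_elim2)
  then obtain n where "b \<le> real n"
    "\<forall>c1\<in>proj P (\<gamma> (real n)). \<forall>c2\<in>proj P (\<beta> (real n)). dist c1 c2 \<le> C"
    unfolding eventually_sequentially by blast
  then show ?thesis
    using geod_ray_close_on_window_transfer[OF ctr P rC \<gamma>(1) \<beta>(1) window \<gamma>_close] by blast
qed

lemma freq_ray_transfer:
  assumes \<gamma>: "freq_ray r C L \<theta> \<gamma>" and L: "0 \<le> L"
    and transfer: "\<And>s p lp a b. 0 \<le> s - L/2 \<Longrightarrow> geod_seg p lp a b \<Longrightarrow> contracting C (p ` {0..lp}) \<Longrightarrow>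
        \<forall>u\<in>{s - L/2..s + L/2}. infdist (\<gamma> u) (p ` {0..lp}) \<le> r \<Longrightarrow>
        \<forall>u\<in>{s - L/2..s + L/2}. infdist (\<beta> u) (p ` {0..lp}) \<le> r'"
  shows "freq_ray r' C L \<theta> \<beta>"
proof -
  obtain R0 where R0: "\<forall>l\<ge>R0. freq_seg r C L \<theta> \<gamma> l"
    using \<gamma> unfolding freq_ray_def by blast
  have "freq_seg r' C L \<theta> \<beta> l" if l: "R0 \<le> l" for l
    unfolding freq_seg_def
  proof (intro allI impI)
    fix t assume t: "0 < t \<and> t < (1 - \<theta>) * l"
    then obtain s p lp a b where s: "{s - L/2..s + L/2} \<subseteq> {t..t + \<theta> * l}"
      and p: "geod_seg p lp a b" "contracting C (p ` {0..lp})"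
      and close: "\<forall>u\<in>{s - L/2..s + L/2}. infdist (\<gamma> u) (p ` {0..lp}) \<le> r"
      using R0 l unfolding freq_seg_def by blast
    have "0 \<le> s - L/2"
      using s t L by auto
    then show "\<exists>s. {s - L/2..s + L/2} \<subseteq> {t..t + \<theta> * l} \<and>
        (\<exists>p lp a b. geod_seg p lp a b \<and> contracting C (p ` {0..lp}) \<and>
          (\<forall>u\<in>{s - L/2..s + L/2}. infdist (\<beta> u) (p ` {0..lp}) \<le> r'))"
      using s p transfer[OF _ p close] by blast
  qed
  then show ?thesis
    unfolding freq_ray_def by blast
qed

lemma conv_compact_mem_cls:
  assumes "conv_compact e rel" "\<xi> \<in> bdry e"
  shows "\<xi> \<in> cls e rel \<xi>"
proof -
  have "\<forall>\<xi>\<in>bdry e. rel \<xi> \<xi>"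
    using assms(1) unfolding conv_compact_def by (elim conjE)
  with assms(2) show ?thesis
    unfolding cls_def by blast
qed

theorem lemma2p24:
  fixes e :: "'a::metric_space \<Rightarrow> 'm::metric_space"
    and rel :: "'m \<Rightarrow> 'm \<Rightarrow> bool"
  assumes proper: "\<forall>(x::'a) (R::real). compact (cball x R)"
    and geodesic: "\<forall>x y::'a. \<exists>g l. geod_seg g l x y"
    and cc: "conv_compact e rel"
  shows "\<forall>r C. r \<ge> C \<and> C > 0 \<longrightarrow>
           (\<exists>rh L0. \<forall>L \<theta> \<gamma> x0 \<xi>.
              L \<ge> L0 \<and> 0 < \<theta> \<and> \<theta> \<le> 1 \<and>
              geod_ray \<gamma> x0 \<and> freq_ray r C L \<theta> \<gamma> \<and>
              \<xi> \<in> bdry e \<and> ends_at e rel \<gamma> \<xi> \<and>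
              (\<forall>\<eta>\<in>cls e rel \<xi>. nonpinched e rel \<eta>) \<longrightarrow>
              (\<forall>\<beta>. geod_ray \<beta> x0 \<and> ends_at e rel \<beta> \<xi> \<longrightarrow> freq_ray rh C L \<theta> \<beta>))"
proof (intro allI impI)
  fix r C :: real assume rC: "r \<ge> C \<and> C > 0"
  have "freq_ray (3 * r + 3 * C + 12) C L \<theta> \<beta>"
    if L: "2 * r + 3 * C + 3 \<le> L" and \<gamma>: "geod_ray \<gamma> x0" "freq_ray r C L \<theta> \<gamma>" "ends_at e rel \<gamma> \<xi>"
      and \<xi>: "\<xi> \<in> bdry e" "\<forall>\<eta>\<in>cls e rel \<xi>. nonpinched e rel \<eta>"
      and \<beta>: "geod_ray \<beta> x0" "ends_at e rel \<beta> \<xi>"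
    for L \<theta> \<gamma> x0 \<xi> \<beta>
  proof (rule freq_ray_transfer[OF \<gamma>(2)])
    have np: "nonpinched e rel \<xi>"
      using \<xi> conv_compact_mem_cls[OF cc] by blast
    fix s p lp a b
    assume window: "0 \<le> s - L/2" and p: "geod_seg p lp a b" "contracting C (p ` {0..lp})"
      and \<gamma>_close: "\<forall>u\<in>{s - L/2..s + L/2}. infdist (\<gamma> u) (p ` {0..lp}) \<le> r"
    have P: "compact (p ` {0..lp})" "p ` {0..lp} \<noteq> {}"
      using p(1) geodesic_on_compact_image unfolding geod_seg_iff by auto
    have "2 * r + 3 * C + 3 \<le> (s + L/2) - (s - L/2)"
      using L by simp
    with P rC window show "\<forall>u\<in>{s - L/2..s + L/2}. infdist (\<beta> u) (p ` {0..lp}) \<le> 3 * r + 3 * C + 12"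
      using nonpinched_geod_ray_close_on_window[OF geodesic np \<gamma>(1,3) \<beta> p(2) _ _ _ _ _ _ \<gamma>_close]
      by auto
  qed (use rC L in auto)
  then show "\<exists>rh L0. \<forall>L \<theta> \<gamma> x0 \<xi>. L \<ge> L0 \<and> 0 < \<theta> \<and> \<theta> \<le> 1 \<and>
      geod_ray \<gamma> x0 \<and> freq_ray r C L \<theta> \<gamma> \<and> \<xi> \<in> bdry e \<and> ends_at e rel \<gamma> \<xi> \<and>
      (\<forall>\<eta>\<in>cls e rel \<xi>. nonpinched e rel \<eta>) \<longrightarrow>
      (\<forall>\<beta>. geod_ray \<beta> x0 \<and> ends_at e rel \<beta> \<xi> \<longrightarrow> freq_ray rh C L \<theta> \<beta>)"
    by blast
qed

end
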